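(* Let $J\subset\mathbb N_+$ be finite and let $\mathcal M(M_J,P)_l$ denote the part of the Margolis homology $\mathcal M(M_J,P)=\ker P/\operatorname{im}P$ of reduced length $l$. If $|J|=2t$, then $\dim_{\mathbb F_2}\mathcal M(M_J,P)_l=2^t$ for $l=t$ and $0$ otherwise. If $|J|=2t+1$, then $\dim_{\mathbb F_2}\mathcal M(M_J,P)_l=2^t$ for $l\in\{t,t+1\}$ and $0$ otherwise.
   Context: Over $\mathbb F_2$, $\Lambda(Q_1,P)$ is the exterior algebra on $Q_1,P$, a Hopf algebra with $Q_1$ primitive and $\Delta(P)=P\otimes1+Q_1\otimes Q_1+1\otimes P$. For $i\in\mathbb N_+$, $M_i$ has basis $t_i,x_i$ with $Q_1(x_i)=t_i$, $Q_1(t_i)=0$, $P=0$; for finite $J\subset\mathbb N_+$, $M_J=\bigotimes_{j\in J}M_j$ with action through the coproduct. $M_J$ has basis $t_Ix_{J\setminus I}$ ($I\subseteq J$; the tensor with factor $t_j$ for $j\in I$, $x_j$ otherwise), whose reduced length is $|J\setminus I|$. $Q_1$ lowers reduced length by $1$ and $P$ by $2$, so $\mathcal M(M_J,P)$ splits as a direct sum of its reduced-length-homogeneous parts $\mathcal M(M_J,P)_l$. *)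

theory Defs
  imports Main "HOL.Vector_Spaces" "HOL-Library.Z2" "HOL-Library.Function_Algebras"
begin

text \<open>An element of M_J is represented by its coefficient function on the basis
  t_I x_(J - I), I a subset of J: a map v :: nat set => bit vanishing outside Pow J.\<close>

definition MJ :: "nat set \<Rightarrow> (nat set \<Rightarrow> bit) set" where
  "MJ J = {v. \<forall>I. v I \<noteq> 0 \<longrightarrow> I \<subseteq> J}"

definition scaleF2 :: "bit \<Rightarrow> (nat set \<Rightarrow> bit) \<Rightarrow> (nat set \<Rightarrow> bit)" where
  "scaleF2 c v = (\<lambda>I. c * v I)"

definition redlen_part :: "nat set \<Rightarrow> nat \<Rightarrow> (nat set \<Rightarrow> bit) set" where
  "redlen_part J l = {v \<in> MJ J. \<forall>I. v I \<noteq> 0 \<longrightarrow> card (J - I) = l}"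

text \<open>Action of P on M_J through the iterated coproduct
  P |-> sum_i P_i + sum_(i<j) Q1_i Q1_j, with P = 0 on each M_j:
  P(t_K x_(J-K)) = sum over 2-subsets {i,j} of J - K of t_(K+{i,j}) x_(J-K-{i,j}).\<close>
definition P_act :: "nat set \<Rightarrow> (nat set \<Rightarrow> bit) \<Rightarrow> (nat set \<Rightarrow> bit)" where
  "P_act J v = (\<lambda>I. if I \<subseteq> J then (\<Sum>K\<in>{K. K \<subseteq> I \<and> card K = 2}. v (I - K)) else 0)"

definition margolis_ker :: "nat set \<Rightarrow> nat \<Rightarrow> (nat set \<Rightarrow> bit) set" where
  "margolis_ker J l = {v \<in> redlen_part J l. P_act J v = (\<lambda>_. 0)}"

definition margolis_im :: "nat set \<Rightarrow> nat \<Rightarrow> (nat set \<Rightarrow> bit) set" where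
  "margolis_im J l = {P_act J w | w. w \<in> MJ J} \<inter> redlen_part J l"

text \<open>dim over F_2 of M(M_J,P)_l = (ker P)_l / (im P)_l, computed as
  dim (ker P)_l - dim (im P)_l (the latter is a subspace of the former).\<close>
definition margolis_dim :: "nat set \<Rightarrow> nat \<Rightarrow> nat" where
  "margolis_dim J l =
     vector_space.dim scaleF2 (margolis_ker J l) - vector_space.dim scaleF2 (margolis_im J l)"

end

theory Submission
  imports Defs
begin

text \<open>
  An element of M_(J \<union> {a}) = M_J \<otimes> M_a is p \<otimes> x_a + q \<otimes> t_a, and P acts by
  (p, q) \<mapsto> (P p, P q + Q1 p). For card J even the transpose d of Q1 satisfies Q1 = d P + P d,
  so the substitution q \<mapsto> q + d p makes P diagonal: M_(J \<union> {a}) is two copies of M_J as a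
  P-module, one shifted by one in reduced length. Adjoining two indices a, b, the analogous
  substitution leaves a single off-diagonal identity, from the x_a x_b to the t_a t_b component;
  these two components form an acyclic cone, so M(M_(J \<union> {a, b}), P) is two copies of M(M_J, P)
  shifted by one. Induction from M_{} = F_2 gives the dimensions. Over F_2 they are read off
  cardinalities: card of the cycles = 2 ^ dim M(M_J, P)_l * card of the boundaries.
\<close>

section \<open>Arithmetic over F_2\<close>

declare add_bit_eq_xor [simp del] mult_bit_eq_and [simp del]

lemma fun_bit_add_self [simp]: "(f::'a \<Rightarrow> bit) + f = 0"
  by (simp add: fun_eq_iff)

lemma fun_bit_add_add_cancel [simp]: "(f::'a \<Rightarrow> bit) + g + g = f"
  by (simp add: add.assoc)

lemma fun_bit_numeral_Bit0 [simp]: "(numeral (Num.Bit0 n) :: 'a \<Rightarrow> bit) = 0"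
  by (simp add: fun_eq_iff)

lemma fun_bit_add_eq_0_iff: "(f::'a \<Rightarrow> bit) + g = 0 \<longleftrightarrow> f = g"
  by (metis fun_bit_add_add_cancel add_0)

lemma of_nat_bit: "(of_nat n :: bit) = (if even n then 0 else 1)"
  by (induction n) auto

lemma sum_sum_symmetric_bit:
  fixes h :: "'a \<Rightarrow> 'a \<Rightarrow> bit"
  assumes "finite X" and "\<And>x y. h x y = h y x"
  shows "(\<Sum>x\<in>X. \<Sum>y\<in>X. h x y) = (\<Sum>x\<in>X. h x x)"
  using assms(1)
proof (induction X rule: finite_induct)
  case (insert a X)
  have "(\<Sum>x\<in>insert a X. \<Sum>y\<in>insert a X. h x y)
      = h a a + ((\<Sum>y\<in>X. h a y) + (\<Sum>x\<in>X. h x a)) + (\<Sum>x\<in>X. \<Sum>y\<in>X. h x y)"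
    using insert.hyps by (simp add: sum.distrib add_ac)
  also have "(\<Sum>y\<in>X. h a y) + (\<Sum>x\<in>X. h x a) = 0"
    using assms(2) by simp
  finally show ?case using insert.IH insert.hyps by simp
qed simp

interpretation F2: vector_space scaleF2
  by unfold_locales (simp_all add: scaleF2_def fun_eq_iff algebra_simps)

lemma scaleF2_eq: "scaleF2 c v = (if c = 0 then 0 else v)"
  by (cases c) (simp_all add: scaleF2_def fun_eq_iff)

lemma card_span_F2:
  assumes "finite B" and "F2.independent B"
  shows "card (F2.span B) = 2 ^ card B"
  using assms
proof (induction B rule: finite_induct)
  case (insert b B)
  have indep: "F2.independent B" and b: "b \<notin> F2.span B"
    using insert.prems insert.hyps(2) by (auto simp: F2.independent_insert)
  have span_insert: "F2.span (insert b B) = F2.span B \<union> (+) b ` F2.span B"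
  proof (intro equalityI subsetI)
    fix x assume "x \<in> F2.span (insert b B)"
    then obtain k where k: "x - scaleF2 k b \<in> F2.span B" by (auto simp: F2.span_insert)
    show "x \<in> F2.span B \<union> (+) b ` F2.span B"
    proof (cases "k = 0")
      case False
      with k have "x - b \<in> F2.span B" by (simp add: scaleF2_eq)
      then show ?thesis by (auto intro: rev_image_eqI[of "x - b"])
    qed (use k in \<open>simp add: scaleF2_eq\<close>)
  qed (auto intro: F2.span_add F2.span_base F2.span_mono[THEN subsetD, of B "insert b B"])
  have disjoint: "F2.span B \<inter> (+) b ` F2.span B = {}"
  proof (rule ccontr)
    assume "F2.span B \<inter> (+) b ` F2.span B \<noteq> {}"
    then obtain y where "y \<in> F2.span B" "b + y \<in> F2.span B" by auto
    then have "(b + y) - y \<in> F2.span B" by (intro F2.span_diff)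
    with b show False by simp
  qed
  have "finite (F2.span B)"
    using insert.IH[OF indep] by (metis card.infinite power_not_zero zero_neq_numeral)
  then have "card (F2.span (insert b B)) = card (F2.span B) + card ((+) b ` F2.span B)"
    unfolding span_insert using disjoint by (intro card_Un_disjoint) auto
  also have "card ((+) b ` F2.span B) = card (F2.span B)"
    by (rule card_image) (auto simp: inj_on_def)
  finally show ?case using insert.IH[OF indep] insert.hyps by simp
qed simp

lemma card_subspace_F2:
  assumes "F2.subspace W" and "finite W"
  shows "card W = 2 ^ F2.dim W"
proof -
  obtain B where B: "B \<subseteq> W" "F2.independent B" "W \<subseteq> F2.span B" "card B = F2.dim W"
    using F2.basis_exists by blast
  then have "F2.span B = W"
    using assms(1) F2.span_minimal by blast
  with B assms(2) show ?thesis
    using card_span_F2 finite_subset by metis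
qed

lemma finite_MJ: "finite J \<Longrightarrow> finite (MJ J)"
proof -
  assume "finite J"
  have "MJ J \<subseteq> {f. \<forall>x. (x \<in> Pow J \<longrightarrow> f x \<in> UNIV) \<and> (x \<notin> Pow J \<longrightarrow> f x = 0)}"
    by (force simp: MJ_def)
  moreover have "finite {f. \<forall>x. (x \<in> Pow J \<longrightarrow> f x \<in> (UNIV::bit set)) \<and> (x \<notin> Pow J \<longrightarrow> f x = 0)}"
  proof (rule finite_set_of_finite_funs)
    have "(UNIV::bit set) = {0, 1}" using bit_not_zero_iff by blast
    then show "finite (UNIV::bit set)" by (metis finite.emptyI finite.insertI)
  qed (simp add: \<open>finite J\<close>)
  ultimately show ?thesis by (rule finite_subset)
qed

section \<open>The operators P, Q1 and the transpose of Q1\<close>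

abbreviation two_subsets :: "'a set \<Rightarrow> 'a set set" where
  "two_subsets I \<equiv> {K. K \<subseteq> I \<and> card K = 2}"

definition Q1_act :: "nat set \<Rightarrow> (nat set \<Rightarrow> bit) \<Rightarrow> nat set \<Rightarrow> bit" where
  "Q1_act J f = (\<lambda>I. if I \<subseteq> J then (\<Sum>i\<in>I. f (I - {i})) else 0)"

text \<open>The transpose of Q1 in the basis t_I x_(J-I); it raises reduced length by one.\<close>
definition Q1_adj :: "nat set \<Rightarrow> (nat set \<Rightarrow> bit) \<Rightarrow> nat set \<Rightarrow> bit" where
  "Q1_adj J f = (\<lambda>I. \<Sum>i\<in>J - I. f (insert i I))"

text \<open>combine a p q is p \<otimes> x_a + q \<otimes> t_a under M_(J \<union> {a}) = M_J \<otimes> M_a.\<close>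
definition combine :: "nat \<Rightarrow> (nat set \<Rightarrow> bit) \<Rightarrow> (nat set \<Rightarrow> bit) \<Rightarrow> nat set \<Rightarrow> bit" where
  "combine a p q = (\<lambda>I. if a \<in> I then q (I - {a}) else p I)"

lemma P_act_add: "P_act J (f + g) = P_act J f + P_act J g"
  by (simp add: P_act_def fun_eq_iff sum.distrib)

lemma P_act_zero [simp]: "P_act J 0 = 0"
  by (simp add: P_act_def fun_eq_iff)

lemma Q1_act_add: "Q1_act J (f + g) = Q1_act J f + Q1_act J g"
  by (simp add: Q1_act_def fun_eq_iff sum.distrib)

lemma Q1_adj_add: "Q1_adj J (f + g) = Q1_adj J f + Q1_adj J g"
  by (simp add: Q1_adj_def fun_eq_iff sum.distrib)

lemma Q1_adj_zero [simp]: "Q1_adj J 0 = 0"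
  by (simp add: Q1_adj_def fun_eq_iff)

lemma combine_add: "combine a p q + combine a p' q' = combine a (p + p') (q + q')"
  by (simp add: combine_def fun_eq_iff)

lemma combine_zero [simp]: "combine a 0 0 = 0"
  by (simp add: combine_def fun_eq_iff)

lemma zero_in_MJ [simp]: "0 \<in> MJ J"
  by (simp add: MJ_def)

lemma MJ_outside: "f \<in> MJ J \<Longrightarrow> \<not> I \<subseteq> J \<Longrightarrow> f I = 0"
  unfolding MJ_def by blast

lemma add_in_MJ:
  assumes "f \<in> MJ J" and "g \<in> MJ J"
  shows "f + g \<in> MJ J"
proof -
  have "(f + g) I \<noteq> 0 \<Longrightarrow> f I \<noteq> 0 \<or> g I \<noteq> 0" for I by auto
  with assms show ?thesis unfolding MJ_def by blast
qed

lemma P_act_in_MJ: "P_act J f \<in> MJ J"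
  by (simp add: MJ_def P_act_def del: bit_not_zero_iff)

lemma Q1_adj_in_MJ:
  assumes "f \<in> MJ J"
  shows "Q1_adj J f \<in> MJ J"
  unfolding MJ_def
proof (intro CollectI allI impI)
  fix I assume "Q1_adj J f I \<noteq> 0"
  then obtain i where "i \<in> J - I" "f (insert i I) \<noteq> 0"
    unfolding Q1_adj_def by (meson sum.not_neutral_contains_not_neutral)
  with assms show "I \<subseteq> J" by (auto simp: MJ_def)
qed

lemma combine_in_MJ:
  assumes "p \<in> MJ J" and "q \<in> MJ J"
  shows "combine a p q \<in> MJ (insert a J)"
  unfolding MJ_def
proof (intro CollectI allI impI)
  fix I assume "combine a p q I \<noteq> 0"
  with assms show "I \<subseteq> insert a J"
    unfolding MJ_def combine_def by (cases "a \<in> I") auto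
qed

lemma combine_inject:
  assumes "a \<notin> J" "p \<in> MJ J" "q \<in> MJ J" "p' \<in> MJ J" "q' \<in> MJ J"
    and "combine a p q = combine a p' q'"
  shows "p = p' \<and> q = q'"
proof (intro conjI ext)
  fix I
  show "p I = p' I"
  proof (cases "a \<in> I")
    case True
    then have "\<not> I \<subseteq> J" using assms(1) by auto
    then show ?thesis using assms(2,4) by (simp add: MJ_outside)
  qed (use fun_cong[OF assms(6), of I] in \<open>simp add: combine_def\<close>)
  show "q I = q' I"
  proof (cases "a \<in> I")
    case True
    then have "\<not> I \<subseteq> J" using assms(1) by auto
    then show ?thesis using assms(3,5) by (simp add: MJ_outside)
  next
    case False
    then have "insert a I - {a} = I" by auto
    then show ?thesis using fun_cong[OF assms(6), of "insert a I"] by (simp add: combine_def)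
  qed
qed

lemma combine_cases:
  assumes "a \<notin> J" and "v \<in> MJ (insert a J)"
  obtains p q where "p \<in> MJ J" "q \<in> MJ J" "v = combine a p q"
proof
  show "(\<lambda>I. if a \<in> I then 0 else v I) \<in> MJ J"
    and "(\<lambda>I. if a \<in> I then 0 else v (insert a I)) \<in> MJ J"
    using assms by (auto simp: MJ_def)
  show "v = combine a (\<lambda>I. if a \<in> I then 0 else v I) (\<lambda>I. if a \<in> I then 0 else v (insert a I))"
    by (auto simp: combine_def insert_absorb)
qed

lemma two_subsets_insert:
  assumes "a \<notin> I"
  shows "two_subsets (insert a I) = two_subsets I \<union> (\<lambda>i. {a, i}) ` I"
proof (intro equalityI subsetI)
  fix K assume "K \<in> two_subsets (insert a I)"
  then obtain x y where "K = {x, y}" "x \<noteq> y" "K \<subseteq> insert a I" by (auto simp: card_2_iff)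
  then show "K \<in> two_subsets I \<union> (\<lambda>i. {a, i}) ` I"
    using assms by (cases "a \<in> K") (auto simp: insert_commute)
next
  fix K assume "K \<in> two_subsets I \<union> (\<lambda>i. {a, i}) ` I"
  then show "K \<in> two_subsets (insert a I)"
    using assms by (auto simp: card_insert_if)
qed

lemma finite_two_subsets: "finite I \<Longrightarrow> finite (two_subsets I)"
  by (rule finite_subset[of _ "Pow I"]) auto

lemma sum_two_subsets_insert:
  assumes "finite I" and "a \<notin> I"
  shows "(\<Sum>K\<in>two_subsets (insert a I). g K) = (\<Sum>K\<in>two_subsets I. g K) + (\<Sum>i\<in>I. g {a, i})"
proof -
  have "(\<Sum>K\<in>two_subsets (insert a I). g K)
      = (\<Sum>K\<in>two_subsets I. g K) + (\<Sum>K\<in>(\<lambda>i. {a, i}) ` I. g K)"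
    unfolding two_subsets_insert[OF assms(2)]
    using assms by (intro sum.union_disjoint) (auto simp: finite_two_subsets)
  also have "(\<Sum>K\<in>(\<lambda>i. {a, i}) ` I. g K) = (\<Sum>i\<in>I. g {a, i})"
    using assms by (intro sum.reindex_cong[where l="\<lambda>i. {a, i}"]) (auto simp: inj_on_def doubleton_eq_iff)
  finally show ?thesis .
qed

lemma card_two_subsets_containing:
  assumes "finite I" and "k \<in> I"
  shows "card {K \<in> two_subsets I. k \<in> K} = card I - 1"
proof -
  have "{K \<in> two_subsets I. k \<in> K} = (\<lambda>i. {k, i}) ` (I - {k})"
  proof (intro equalityI subsetI)
    fix K assume "K \<in> {K \<in> two_subsets I. k \<in> K}"
    then obtain x y where "K = {x, y}" "x \<noteq> y" "K \<subseteq> I" "k \<in> K" by (auto simp: card_2_iff)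
    then show "K \<in> (\<lambda>i. {k, i}) ` (I - {k})" by (auto simp: insert_commute)
  qed (use assms in auto)
  also have "card \<dots> = card (I - {k})"
    by (rule card_image) (auto simp: inj_on_def doubleton_eq_iff)
  finally show ?thesis using assms by simp
qed

lemma sum_two_subsets_sum:
  fixes g :: "'a \<Rightarrow> 'b::comm_semiring_1"
  assumes "finite I"
  shows "(\<Sum>K\<in>two_subsets I. \<Sum>k\<in>K. g k) = of_nat (card I - 1) * (\<Sum>k\<in>I. g k)"
proof -
  have "(\<Sum>K\<in>two_subsets I. \<Sum>k\<in>K. g k) = (\<Sum>K\<in>two_subsets I. \<Sum>k\<in>{k\<in>I. k \<in> K}. g k)"
    by (intro sum.cong refl) auto
  also have "\<dots> = (\<Sum>k\<in>I. \<Sum>K\<in>{K\<in>two_subsets I. k \<in> K}. g k)"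
    using assms by (intro sum.swap_restrict) (auto simp: finite_two_subsets)
  also have "\<dots> = (\<Sum>k\<in>I. of_nat (card I - 1) * g k)"
    by (intro sum.cong refl) (use card_two_subsets_containing[OF assms] in simp)
  finally show ?thesis by (simp add: sum_distrib_left)
qed

lemma P_act_combine:
  assumes "finite J" and "a \<notin> J"
  shows "P_act (insert a J) (combine a p q) = combine a (P_act J p) (P_act J q + Q1_act J p)"
proof
  fix I
  show "P_act (insert a J) (combine a p q) I = combine a (P_act J p) (P_act J q + Q1_act J p) I"
  proof (cases "a \<in> I")
    case True
    define I0 where "I0 = I - {a}"
    have I: "I = insert a I0" "a \<notin> I0" using True by (auto simp: I0_def)
    show ?thesis
    proof (cases "I0 \<subseteq> J")
      case sub: True
      then have "finite I0" using assms(1) finite_subset by blast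
      have "P_act (insert a J) (combine a p q) I = (\<Sum>K\<in>two_subsets (insert a I0). combine a p q (I - K))"
        using sub I by (simp add: P_act_def insert_mono subset_insertI2)
      also have "\<dots> = (\<Sum>K\<in>two_subsets I0. combine a p q (I - K)) + (\<Sum>i\<in>I0. combine a p q (I - {a, i}))"
        by (rule sum_two_subsets_insert[OF \<open>finite I0\<close> I(2)])
      also have "(\<Sum>K\<in>two_subsets I0. combine a p q (I - K)) = (\<Sum>K\<in>two_subsets I0. q (I0 - K))"
        using I by (intro sum.cong refl) (auto simp: combine_def intro!: arg_cong[where f = q])
      also have "(\<Sum>i\<in>I0. combine a p q (I - {a, i})) = (\<Sum>i\<in>I0. p (I0 - {i}))"
        using I by (intro sum.cong refl) (auto simp: combine_def intro!: arg_cong[where f = p])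
      finally show ?thesis
        using sub True by (simp add: combine_def P_act_def Q1_act_def flip: I0_def)
    qed (use I in \<open>auto simp: P_act_def Q1_act_def combine_def subset_insert\<close>)
  next
    case False
    then have "combine a p q (I - K) = p (I - K)" for K
      by (simp add: combine_def)
    with False show ?thesis
      by (auto simp: combine_def P_act_def subset_insert)
  qed
qed

lemma Q1_act_combine:
  assumes "finite J" and "a \<notin> J" and "p \<in> MJ J"
  shows "Q1_act (insert a J) (combine a p q) = combine a (Q1_act J p) (Q1_act J q + p)"
proof
  fix I
  show "Q1_act (insert a J) (combine a p q) I = combine a (Q1_act J p) (Q1_act J q + p) I"
  proof (cases "a \<in> I")
    case True
    define I0 where "I0 = I - {a}"
    have I: "I = insert a I0" "a \<notin> I0" using True by (auto simp: I0_def)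
    show ?thesis
    proof (cases "I0 \<subseteq> J")
      case sub: True
      then have "finite I0" using assms(1) finite_subset by blast
      have "Q1_act (insert a J) (combine a p q) I = combine a p q (I - {a}) + (\<Sum>i\<in>I0. combine a p q (I - {i}))"
        using sub I \<open>finite I0\<close> by (simp add: Q1_act_def insert_mono subset_insertI2)
      also have "(\<Sum>i\<in>I0. combine a p q (I - {i})) = (\<Sum>i\<in>I0. q (I0 - {i}))"
        using I by (intro sum.cong refl) (auto simp: combine_def intro!: arg_cong[where f = q])
      also have "combine a p q (I - {a}) = p I0"
        using I by (simp add: combine_def I0_def)
      finally show ?thesis
        using sub True by (simp add: combine_def Q1_act_def add.commute flip: I0_def)
    qed (use I assms(3) in \<open>auto simp: Q1_act_def combine_def MJ_outside subset_insert\<close>)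
  next
    case False
    then have "combine a p q (I - {i}) = p (I - {i})" for i
      by (simp add: combine_def)
    with False show ?thesis
      by (auto simp: combine_def Q1_act_def subset_insert)
  qed
qed

text \<open>P P = 0: the terms f (I - (K \<union> L)) of P (P f) I for disjoint pairs K, L cancel against
  those for L, K.\<close>
lemma P_act_P_act [simp]:
  assumes "finite J"
  shows "P_act J (P_act J f) = 0"
proof
  fix I
  show "P_act J (P_act J f) I = 0 I"
  proof (cases "I \<subseteq> J")
    case True
    then have "finite I" using assms finite_subset by blast
    define h where "h K L = (if K \<inter> L = {} then f (I - (K \<union> L)) else 0)" for K L
    have inner: "P_act J f (I - K) = (\<Sum>L\<in>two_subsets I. h K L)" if "K \<in> two_subsets I" for K
    proof -
      have "two_subsets (I - K) = {L \<in> two_subsets I. K \<inter> L = {}}" by auto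
      then have "P_act J f (I - K) = (\<Sum>L\<in>{L \<in> two_subsets I. K \<inter> L = {}}. f (I - K - L))"
        using True by (auto simp: P_act_def)
      also have "\<dots> = (\<Sum>L\<in>two_subsets I. h K L)"
        unfolding h_def sum.inter_filter[OF finite_two_subsets[OF \<open>finite I\<close>]]
        by (intro sum.cong refl) (auto simp: Diff_eq Int_assoc)
      finally show ?thesis .
    qed
    have "P_act J g I = (\<Sum>K\<in>two_subsets I. g (I - K))" for g
      using True by (simp add: P_act_def)
    then have "P_act J (P_act J f) I = (\<Sum>K\<in>two_subsets I. \<Sum>L\<in>two_subsets I. h K L)"
      using inner by simp
    also have "\<dots> = (\<Sum>K\<in>two_subsets I. h K K)"
      by (rule sum_sum_symmetric_bit) (auto simp: h_def finite_two_subsets \<open>finite I\<close> Int_commute Un_commute)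
    also have "\<dots> = 0"
      by (rule sum.neutral) (auto simp: h_def)
    finally show ?thesis by simp
  qed (simp add: P_act_def)
qed

lemma P_act_insert:
  assumes "I \<subseteq> J" and "finite I" and "i \<in> J - I"
  shows "P_act J f (insert i I) = (\<Sum>K\<in>two_subsets I. f (insert i (I - K))) + Q1_act J f I"
proof -
  have "P_act J f (insert i I) = (\<Sum>K\<in>two_subsets (insert i I). f (insert i I - K))"
    using assms by (simp add: P_act_def)
  also have "\<dots> = (\<Sum>K\<in>two_subsets I. f (insert i I - K)) + (\<Sum>k\<in>I. f (insert i I - {i, k}))"
    using assms by (intro sum_two_subsets_insert) auto
  also have "(\<Sum>K\<in>two_subsets I. f (insert i I - K)) = (\<Sum>K\<in>two_subsets I. f (insert i (I - K)))"
    using assms by (intro sum.cong refl) (auto intro!: arg_cong[where f = f])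
  also have "(\<Sum>k\<in>I. f (insert i I - {i, k})) = Q1_act J f I"
    using assms by (auto simp: Q1_act_def intro!: sum.cong arg_cong[where f = f])
  finally show ?thesis .
qed

lemma Q1_adj_Diff_two_subset:
  assumes "finite J" and "I \<subseteq> J" and "K \<in> two_subsets I"
  shows "Q1_adj J f (I - K) = (\<Sum>i\<in>J - I. f (insert i (I - K))) + (\<Sum>k\<in>K. f (I - {k}))"
proof -
  obtain x y where K: "K = {x, y}" "x \<noteq> y" using assms(3) by (auto simp: card_2_iff)
  have "J - (I - K) = (J - I) \<union> K" using assms(2,3) by auto
  then have "Q1_adj J f (I - K) = (\<Sum>i\<in>J - I. f (insert i (I - K))) + (\<Sum>i\<in>K. f (insert i (I - K)))"
    unfolding Q1_adj_def using assms K by (simp add: sum.union_disjoint)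
  also have "(\<Sum>i\<in>K. f (insert i (I - K))) = (\<Sum>k\<in>K. f (I - {k}))"
  proof -
    have "insert x (I - K) = I - {y}" "insert y (I - K) = I - {x}"
      using assms(3) K by auto
    then show ?thesis using K by (simp add: add.commute)
  qed
  finally show ?thesis .
qed

text \<open>Each f (I - {k}) enters Q1_adj (P f) I card (J - I) times and P (Q1_adj f) I card I - 1
  times; for even card J the total is odd unless I = {}, where Q1 f I = 0.\<close>
lemma Q1_act_homotopy:
  assumes "finite J" and "even (card J)"
  shows "Q1_adj J (P_act J f) + P_act J (Q1_adj J f) = Q1_act J f"
proof
  fix I
  show "(Q1_adj J (P_act J f) + P_act J (Q1_adj J f)) I = Q1_act J f I"
  proof (cases "I \<subseteq> J")
    case sub: True
    then have "finite I" using assms(1) finite_subset by blast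
    define X where "X = Q1_act J f I"
    define S where "S = (\<Sum>K\<in>two_subsets I. \<Sum>i\<in>J - I. f (insert i (I - K)))"
    have "Q1_adj J (P_act J f) I = (\<Sum>i\<in>J - I. (\<Sum>K\<in>two_subsets I. f (insert i (I - K))) + X)"
      unfolding Q1_adj_def X_def using sub \<open>finite I\<close> by (intro sum.cong refl P_act_insert)
    also have "\<dots> = S + of_nat (card (J - I)) * X"
      by (simp add: S_def sum.distrib sum.swap[of _ "J - I"])
    finally have left: "Q1_adj J (P_act J f) I = S + of_nat (card (J - I)) * X" .
    have "P_act J (Q1_adj J f) I = (\<Sum>K\<in>two_subsets I. Q1_adj J f (I - K))"
      using sub by (simp add: P_act_def)
    also have "\<dots> = S + (\<Sum>K\<in>two_subsets I. \<Sum>k\<in>K. f (I - {k}))"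
      using assms(1) sub by (simp add: S_def Q1_adj_Diff_two_subset sum.distrib)
    also have "\<dots> = S + of_nat (card I - 1) * X"
      using sub by (simp add: sum_two_subsets_sum \<open>finite I\<close> X_def Q1_act_def)
    finally have right: "P_act J (Q1_adj J f) I = S + of_nat (card I - 1) * X" .
    have "of_nat (card (J - I)) * X + of_nat (card I - 1) * X = X"
    proof (cases "I = {}")
      case False
      then have "card I \<ge> 1" "card I \<le> card J" "card (J - I) = card J - card I"
        using \<open>finite I\<close> assms(1) sub by (auto simp: Suc_le_eq card_gt_0_iff card_mono card_Diff_subset)
      with assms(2) show ?thesis
        by (auto simp: of_nat_bit)
    qed (simp add: X_def Q1_act_def)
    with left right show ?thesis
      by (simp add: X_def add_ac)
  next
    case False
    then have "\<not> insert i I \<subseteq> J" for i by auto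
    with False show ?thesis
      by (simp add: Q1_adj_def P_act_def Q1_act_def del: insert_subset)
  qed
qed

section \<open>Grading by reduced length\<close>

text \<open>graded J k l is the part of M_J of reduced length l - k, and {0} when k > l; keeping the
  shift k separate avoids truncated subtraction.\<close>
definition graded :: "nat set \<Rightarrow> nat \<Rightarrow> nat \<Rightarrow> (nat set \<Rightarrow> bit) set" where
  "graded J k l = {f \<in> MJ J. \<forall>I. f I \<noteq> 0 \<longrightarrow> card (J - I) + k = l}"

definition graded_ker :: "nat set \<Rightarrow> nat \<Rightarrow> nat \<Rightarrow> (nat set \<Rightarrow> bit) set" where
  "graded_ker J k l = {f \<in> graded J k l. P_act J f = 0}"

definition graded_im :: "nat set \<Rightarrow> nat \<Rightarrow> nat \<Rightarrow> (nat set \<Rightarrow> bit) set" where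
  "graded_im J k l = {P_act J w | w. w \<in> MJ J} \<inter> graded J k l"

lemma margolis_ker_eq: "margolis_ker J l = graded_ker J 0 l"
  by (simp add: margolis_ker_def graded_ker_def redlen_part_def graded_def zero_fun_def)

lemma margolis_im_eq: "margolis_im J l = graded_im J 0 l"
  by (simp add: margolis_im_def graded_im_def redlen_part_def graded_def)

lemma graded_subset_MJ: "graded J k l \<subseteq> MJ J"
  and graded_ker_subset_MJ: "graded_ker J k l \<subseteq> MJ J"
  and graded_im_subset_MJ: "graded_im J k l \<subseteq> MJ J"
  by (auto simp: graded_ker_def graded_im_def graded_def)

lemma zero_in_graded [simp]: "0 \<in> graded J k l"
  by (simp add: graded_def)

lemma zero_in_graded_im [simp]: "0 \<in> graded_im J k l"
  unfolding graded_im_def by (auto intro!: exI[of _ 0])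

lemma add_in_graded:
  assumes "f \<in> graded J k l" and "g \<in> graded J k l"
  shows "f + g \<in> graded J k l"
proof -
  have "(f + g) I \<noteq> 0 \<Longrightarrow> f I \<noteq> 0 \<or> g I \<noteq> 0" for I by auto
  with assms add_in_MJ show ?thesis unfolding graded_def by blast
qed

lemma add_in_graded_iff: "g \<in> graded J k l \<Longrightarrow> f + g \<in> graded J k l \<longleftrightarrow> f \<in> graded J k l"
  by (metis add_in_graded fun_bit_add_add_cancel)

lemma Q1_adj_graded:
  assumes "finite J" and "f \<in> graded J (Suc k) l"
  shows "Q1_adj J f \<in> graded J k l"
  unfolding graded_def
proof (intro CollectI conjI allI impI)
  show "Q1_adj J f \<in> MJ J" using assms(2) graded_subset_MJ Q1_adj_in_MJ by blast
  fix I assume "Q1_adj J f I \<noteq> 0"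
  then obtain i where i: "i \<in> J - I" "f (insert i I) \<noteq> 0"
    unfolding Q1_adj_def by (meson sum.not_neutral_contains_not_neutral)
  then have "card (J - insert i I) + Suc k = l" using assms(2) unfolding graded_def by blast
  moreover have "J - I = insert i (J - insert i I)" using i by auto
  then have "card (J - I) = Suc (card (J - insert i I))"
    using assms(1) by (metis card_insert_disjoint finite_Diff Diff_iff insertI1)
  ultimately show "card (J - I) + k = l" by linarith
qed

lemma P_act_graded:
  assumes "finite J" and "f \<in> graded J k l"
  shows "P_act J f \<in> graded J (Suc (Suc k)) l"
  unfolding graded_def
proof (intro CollectI conjI allI impI)
  show "P_act J f \<in> MJ J" by (rule P_act_in_MJ)
  fix I assume nz: "P_act J f I \<noteq> 0"
  then have sub: "I \<subseteq> J" by (auto simp: P_act_def split: if_splits)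
  with nz have "(\<Sum>K\<in>two_subsets I. f (I - K)) \<noteq> 0"
    by (simp add: P_act_def del: bit_not_zero_iff)
  then obtain K where "K \<in> two_subsets I" "f (I - K) \<noteq> 0"
    by (rule sum.not_neutral_contains_not_neutral)
  then have K: "K \<subseteq> I" "card K = 2" "f (I - K) \<noteq> 0" by auto
  then have "card (J - (I - K)) + k = l" using assms(2) unfolding graded_def by blast
  moreover have "J - (I - K) = (J - I) \<union> K" using K sub by auto
  moreover have "finite K" using K(2) card.infinite by fastforce
  then have "card ((J - I) \<union> K) = card (J - I) + card K"
    using assms(1) K by (intro card_Un_disjoint) auto
  ultimately show "card (J - I) + Suc (Suc k) = l"
    using K by simp
qed

lemma combine_graded_iff:
  assumes "finite J" and "a \<notin> J" and "p \<in> MJ J" and "q \<in> MJ J"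
  shows "combine a p q \<in> graded (insert a J) k l \<longleftrightarrow> p \<in> graded J (Suc k) l \<and> q \<in> graded J k l"
proof -
  have card_without_a: "card (insert a J - I) = Suc (card (J - I))" if "a \<notin> I" for I
  proof -
    have "insert a J - I = insert a (J - I)" using that by auto
    then show ?thesis using assms(1,2) by simp
  qed
  have card_with_a: "card (insert a J - insert a I) = card (J - I)" if "a \<notin> I" for I
    using that assms(2) by (metis Diff_insert2 insert_Diff_single Diff_insert_absorb Diff_iff)
  have p_part: "combine a p q I = p I" and q_part: "combine a p q (insert a I) = q I" if "a \<notin> I" for I
    using that by (auto simp: combine_def)
  have "a \<notin> I" if "I \<subseteq> J" for I using that assms(2) by auto
  moreover have "f I \<noteq> 0 \<Longrightarrow> I \<subseteq> J" if "f \<in> MJ J" for f I using that MJ_outside by blast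
  moreover have "I = insert a (I - {a})" "a \<notin> I - {a}" if "a \<in> I" for I using that by auto
  ultimately show ?thesis
    using assms(3,4) combine_in_MJ[OF assms(3,4), of a]
    unfolding graded_def
    by (smt (verit) card_with_a card_without_a p_part q_part add_Suc_right add_Suc mem_Collect_eq)
qed

lemma graded_eq_zero:
  assumes "l < k"
  shows "graded J k l = {0}"
proof -
  have "f = 0" if "f \<in> graded J k l" for f
  proof
    fix I show "f I = 0 I"
      using that assms unfolding graded_def by fastforce
  qed
  then show ?thesis by auto
qed

lemma graded_shift: "k \<le> l \<Longrightarrow> graded J k l = graded J 0 (l - k)"
  by (auto simp: graded_def)

lemma graded_ker_eq_zero: "l < k \<Longrightarrow> graded_ker J k l = {0}"
  unfolding graded_ker_def graded_eq_zero[of l k] by auto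

lemma graded_im_eq_zero: "l < k \<Longrightarrow> graded_im J k l = {0}"
  using zero_in_graded_im[of J k l] unfolding graded_im_def graded_eq_zero[of l k] by blast

lemma graded_ker_shift:
  assumes "k \<le> l"
  shows "graded_ker J k l = graded_ker J 0 (l - k)"
  unfolding graded_ker_def graded_shift[OF assms] ..

lemma graded_im_shift:
  assumes "k \<le> l"
  shows "graded_im J k l = graded_im J 0 (l - k)"
  unfolding graded_im_def graded_shift[OF assms] ..

lemma subspace_graded_ker: "F2.subspace (graded_ker J k l)"
  unfolding F2.subspace_def
  by (auto simp: graded_ker_def scaleF2_eq P_act_add add_in_graded)

lemma subspace_graded_im: "F2.subspace (graded_im J k l)"
  unfolding F2.subspace_def
proof (intro conjI ballI allI)
  fix x y assume "x \<in> graded_im J k l" "y \<in> graded_im J k l"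
  then obtain w1 w2 where "w1 \<in> MJ J" "x = P_act J w1" "w2 \<in> MJ J" "y = P_act J w2"
    and "x + y \<in> graded J k l"
    by (auto simp: graded_im_def add_in_graded)
  then show "x + y \<in> graded_im J k l"
    unfolding graded_im_def by (auto simp: P_act_add intro!: exI[of _ "w1 + w2"] add_in_MJ)
qed (auto simp: scaleF2_eq)

lemma margolis_dim_eq_if_card:
  assumes "finite J" and "card (graded_ker J 0 l) = 2 ^ h * card (graded_im J 0 l)"
  shows "margolis_dim J l = h"
proof -
  have "finite (graded_ker J 0 l)" "finite (graded_im J 0 l)"
    using finite_MJ[OF assms(1)] graded_ker_subset_MJ graded_im_subset_MJ by (metis finite_subset)+
  with assms(2) have "(2::nat) ^ F2.dim (graded_ker J 0 l) = 2 ^ h * 2 ^ F2.dim (graded_im J 0 l)"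
    using card_subspace_F2[OF subspace_graded_ker] card_subspace_F2[OF subspace_graded_im] by metis
  then have "F2.dim (graded_ker J 0 l) = h + F2.dim (graded_im J 0 l)"
    by (simp only: power_add[symmetric] power_inject_exp one_less_numeral_iff semiring_norm(76))
  then show ?thesis
    unfolding margolis_dim_def margolis_ker_eq margolis_im_eq by simp
qed

section \<open>Adjoining one index\<close>

text \<open>Coordinates on M_(J \<union> {a}) in which P is diagonal when card J is even: by
  Q1_act_homotopy, the twist by Q1_adj absorbs the off-diagonal Q1 of P_act_combine.\<close>
definition twist1 :: "nat set \<Rightarrow> nat \<Rightarrow> (nat set \<Rightarrow> bit) \<Rightarrow> (nat set \<Rightarrow> bit) \<Rightarrow> nat set \<Rightarrow> bit" where
  "twist1 J a p q = combine a p (q + Q1_adj J p)"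

lemma twist1_in_MJ: "p \<in> MJ J \<Longrightarrow> q \<in> MJ J \<Longrightarrow> twist1 J a p q \<in> MJ (insert a J)"
  unfolding twist1_def by (intro combine_in_MJ add_in_MJ Q1_adj_in_MJ)

lemma twist1_zero [simp]: "twist1 J a 0 0 = 0"
  by (simp add: twist1_def)

lemma twist1_inject:
  assumes "a \<notin> J" "p \<in> MJ J" "q \<in> MJ J" "p' \<in> MJ J" "q' \<in> MJ J"
    and "twist1 J a p q = twist1 J a p' q'"
  shows "p = p' \<and> q = q'"
proof -
  have "p = p' \<and> q + Q1_adj J p = q' + Q1_adj J p'"
    using assms unfolding twist1_def by (intro combine_inject) (auto intro: add_in_MJ Q1_adj_in_MJ)
  then show ?thesis by auto
qed

lemma twist1_cases:
  assumes "a \<notin> J" and "v \<in> MJ (insert a J)"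
  obtains p q where "p \<in> MJ J" "q \<in> MJ J" "v = twist1 J a p q"
proof -
  obtain p q where pq: "p \<in> MJ J" "q \<in> MJ J" "v = combine a p q"
    using combine_cases[OF assms] .
  then have "v = twist1 J a p (q + Q1_adj J p)" by (simp add: twist1_def)
  with pq show ?thesis using that add_in_MJ Q1_adj_in_MJ by blast
qed

lemma P_act_twist1:
  assumes "finite J" and "a \<notin> J" and "even (card J)"
  shows "P_act (insert a J) (twist1 J a p q) = twist1 J a (P_act J p) (P_act J q)"
  unfolding twist1_def P_act_combine[OF assms(1,2)] P_act_add
    Q1_act_homotopy[OF assms(1,3), symmetric]
  by (simp add: add_ac)

lemma twist1_graded_iff:
  assumes "finite J" and "a \<notin> J" and "p \<in> MJ J" and "q \<in> MJ J"
  shows "twist1 J a p q \<in> graded (insert a J) k l \<longleftrightarrow> p \<in> graded J (Suc k) l \<and> q \<in> graded J k l"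
proof -
  have "twist1 J a p q \<in> graded (insert a J) k l \<longleftrightarrow>
      p \<in> graded J (Suc k) l \<and> q + Q1_adj J p \<in> graded J k l"
    unfolding twist1_def using assms by (subst combine_graded_iff) (auto intro: add_in_MJ Q1_adj_in_MJ)
  also have "\<dots> \<longleftrightarrow> p \<in> graded J (Suc k) l \<and> q \<in> graded J k l"
    using Q1_adj_graded[OF assms(1), of p k l] add_in_graded_iff by auto
  finally show ?thesis .
qed

lemma twist1_in_graded_ker_iff:
  assumes "finite J" and "a \<notin> J" and "even (card J)" and "p \<in> MJ J" and "q \<in> MJ J"
  shows "twist1 J a p q \<in> graded_ker (insert a J) 0 l \<longleftrightarrow> p \<in> graded_ker J 1 l \<and> q \<in> graded_ker J 0 l"
proof -
  have "P_act (insert a J) (twist1 J a p q) = 0 \<longleftrightarrow> P_act J p = 0 \<and> P_act J q = 0"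
    unfolding P_act_twist1[OF assms(1-3)]
    using twist1_inject[OF assms(2) P_act_in_MJ P_act_in_MJ zero_in_MJ zero_in_MJ] by auto
  then show ?thesis
    using twist1_graded_iff[OF assms(1,2,4,5)] by (auto simp: graded_ker_def)
qed

lemma twist1_in_graded_im_iff:
  assumes "finite J" and "a \<notin> J" and "even (card J)" and "p \<in> MJ J" and "q \<in> MJ J"
  shows "twist1 J a p q \<in> graded_im (insert a J) 0 l \<longleftrightarrow> p \<in> graded_im J 1 l \<and> q \<in> graded_im J 0 l"
proof -
  have "twist1 J a p q \<in> P_act (insert a J) ` MJ (insert a J) \<longleftrightarrow>
      p \<in> P_act J ` MJ J \<and> q \<in> P_act J ` MJ J"
  proof
    assume "twist1 J a p q \<in> P_act (insert a J) ` MJ (insert a J)"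
    then obtain w where "w \<in> MJ (insert a J)" "twist1 J a p q = P_act (insert a J) w" by blast
    then obtain p' q' where "p' \<in> MJ J" "q' \<in> MJ J"
      "twist1 J a p q = twist1 J a (P_act J p') (P_act J q')"
      using assms twist1_cases P_act_twist1 by metis
    then show "p \<in> P_act J ` MJ J \<and> q \<in> P_act J ` MJ J"
      using twist1_inject[OF assms(2,4,5) P_act_in_MJ P_act_in_MJ] by blast
  next
    assume "p \<in> P_act J ` MJ J \<and> q \<in> P_act J ` MJ J"
    then obtain p' q' where "p' \<in> MJ J" "q' \<in> MJ J" "p = P_act J p'" "q = P_act J q'" by blast
    then have "twist1 J a p' q' \<in> MJ (insert a J)"
      and "twist1 J a p q = P_act (insert a J) (twist1 J a p' q')"
      using assms(1-3) by (simp_all add: P_act_twist1 twist1_in_MJ)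
    then show "twist1 J a p q \<in> P_act (insert a J) ` MJ (insert a J)" by blast
  qed
  then show ?thesis
    using assms by (auto simp: graded_im_def twist1_graded_iff Setcompr_eq_image)
qed

lemma card_eq_if_twist1_iff:
  assumes "a \<notin> J" and "S \<subseteq> MJ (insert a J)" and "A \<subseteq> MJ J" and "B \<subseteq> MJ J"
    and "\<And>p q. p \<in> MJ J \<Longrightarrow> q \<in> MJ J \<Longrightarrow> twist1 J a p q \<in> S \<longleftrightarrow> p \<in> A \<and> q \<in> B"
  shows "card S = card A * card B"
proof -
  have "S = (\<lambda>(p, q). twist1 J a p q) ` (A \<times> B)"
  proof (intro equalityI subsetI)
    fix v assume "v \<in> S"
    moreover obtain p q where "p \<in> MJ J" "q \<in> MJ J" "v = twist1 J a p q"
      using twist1_cases[OF assms(1)] assms(2) \<open>v \<in> S\<close> by blast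
    ultimately show "v \<in> (\<lambda>(p, q). twist1 J a p q) ` (A \<times> B)"
      using assms(5) by force
  qed (use assms(3-5) in auto)
  moreover have "inj_on (\<lambda>(p, q). twist1 J a p q) (A \<times> B)"
    by (intro inj_onI) (clarsimp, metis assms(3,4) subsetD twist1_inject[OF assms(1)])
  ultimately show ?thesis
    by (simp add: card_image card_cartesian_product)
qed

lemma card_graded_insert:
  assumes "finite J" and "a \<notin> J" and "even (card J)"
  shows "card (graded_ker (insert a J) 0 l) = card (graded_ker J 1 l) * card (graded_ker J 0 l)"
    and "card (graded_im (insert a J) 0 l) = card (graded_im J 1 l) * card (graded_im J 0 l)"
proof -
  show "card (graded_ker (insert a J) 0 l) = card (graded_ker J 1 l) * card (graded_ker J 0 l)"
    by (rule card_eq_if_twist1_iff[OF assms(2)])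
      (simp_all add: graded_ker_subset_MJ twist1_in_graded_ker_iff[OF assms])
  show "card (graded_im (insert a J) 0 l) = card (graded_im J 1 l) * card (graded_im J 0 l)"
    by (rule card_eq_if_twist1_iff[OF assms(2)])
      (simp_all add: graded_im_subset_MJ twist1_in_graded_im_iff[OF assms])
qed

section \<open>Adjoining two indices\<close>

text \<open>Coordinates on M_(J \<union> {a, b}) for card J even. P does not become diagonal: by
  P_act_twist2 the components p and s form the mapping cone of the identity, which is acyclic.\<close>
definition twist2 :: "nat set \<Rightarrow> nat \<Rightarrow> nat \<Rightarrow> (nat set \<Rightarrow> bit) \<Rightarrow> (nat set \<Rightarrow> bit) \<Rightarrow>
    (nat set \<Rightarrow> bit) \<Rightarrow> (nat set \<Rightarrow> bit) \<Rightarrow> nat set \<Rightarrow> bit" where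
  "twist2 J a b p q r s =
     combine b (twist1 J a p q) (combine a (r + Q1_adj J p) (s + Q1_adj J q + Q1_adj J r))"

locale two_new_indices =
  fixes J :: "nat set" and a b :: nat
  assumes finite_J: "finite J" and a_notin: "a \<notin> J" and b_notin: "b \<notin> insert a J"
begin

abbreviation "J2 \<equiv> insert b (insert a J)"

lemma twist2_in_MJ:
  "p \<in> MJ J \<Longrightarrow> q \<in> MJ J \<Longrightarrow> r \<in> MJ J \<Longrightarrow> s \<in> MJ J \<Longrightarrow> twist2 J a b p q r s \<in> MJ J2"
  unfolding twist2_def by (intro combine_in_MJ twist1_in_MJ add_in_MJ Q1_adj_in_MJ)

lemma twist2_inject:
  assumes "p \<in> MJ J" "q \<in> MJ J" "r \<in> MJ J" "s \<in> MJ J"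
    and "p' \<in> MJ J" "q' \<in> MJ J" "r' \<in> MJ J" "s' \<in> MJ J"
    and "twist2 J a b p q r s = twist2 J a b p' q' r' s'"
  shows "p = p' \<and> q = q' \<and> r = r' \<and> s = s'"
proof -
  have MJ_sums: "r + Q1_adj J p \<in> MJ J" "s + Q1_adj J q + Q1_adj J r \<in> MJ J"
    "r' + Q1_adj J p' \<in> MJ J" "s' + Q1_adj J q' + Q1_adj J r' \<in> MJ J"
    using assms(1-8) by (auto intro!: add_in_MJ Q1_adj_in_MJ)
  have "twist1 J a p q = twist1 J a p' q'"
    and second: "combine a (r + Q1_adj J p) (s + Q1_adj J q + Q1_adj J r) =
      combine a (r' + Q1_adj J p') (s' + Q1_adj J q' + Q1_adj J r')"
    using combine_inject[OF b_notin _ _ _ _ assms(9)[unfolded twist2_def]] assms(1-8) MJ_sums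
    by (auto intro: twist1_in_MJ combine_in_MJ)
  then have "p = p'" "q = q'"
    using twist1_inject[OF a_notin assms(1,2,5,6)] by auto
  with combine_inject[OF a_notin MJ_sums(1,2) MJ_sums(3,4) second] show ?thesis
    by auto
qed

lemma twist2_cases:
  assumes "v \<in> MJ J2"
  obtains p q r s where "p \<in> MJ J" "q \<in> MJ J" "r \<in> MJ J" "s \<in> MJ J" "v = twist2 J a b p q r s"
proof -
  obtain X Y where XY: "X \<in> MJ (insert a J)" "Y \<in> MJ (insert a J)" "v = combine b X Y"
    using combine_cases[OF b_notin assms] .
  obtain p q where X: "p \<in> MJ J" "q \<in> MJ J" "X = twist1 J a p q"
    using twist1_cases[OF a_notin XY(1)] .
  obtain r0 s0 where Y: "r0 \<in> MJ J" "s0 \<in> MJ J" "Y = combine a r0 s0"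
    using combine_cases[OF a_notin XY(2)] .
  define r where "r = r0 + Q1_adj J p"
  define s where "s = s0 + Q1_adj J q + Q1_adj J r"
  have "r \<in> MJ J" "s \<in> MJ J"
    unfolding r_def s_def using X Y by (auto intro!: add_in_MJ Q1_adj_in_MJ)
  moreover have "v = twist2 J a b p q r s"
    using XY X Y by (simp add: twist2_def r_def s_def add_ac)
  ultimately show ?thesis using that X by blast
qed

lemma P_act_twist2:
  assumes "even (card J)" and "p \<in> MJ J"
  shows "P_act J2 (twist2 J a b p q r s) = twist2 J a b (P_act J p) (P_act J q) (P_act J r) (P_act J s + p)"
proof -
  have homotopy: "Q1_act J f = Q1_adj J (P_act J f) + P_act J (Q1_adj J f)" for f
    using Q1_act_homotopy[OF finite_J assms(1)] by simp
  have "P_act J2 (twist2 J a b p q r s) =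
      combine b (combine a (P_act J p) (P_act J q + P_act J (Q1_adj J p) + Q1_act J p))
        (combine a (P_act J r + P_act J (Q1_adj J p) + Q1_act J p)
          (P_act J s + P_act J (Q1_adj J q) + P_act J (Q1_adj J r) + Q1_act J r + Q1_act J q + p))"
    using finite_J a_notin b_notin assms
    by (simp add: twist2_def twist1_def P_act_combine Q1_act_combine P_act_add Q1_act_add
        combine_add add_ac)
  also have "\<dots> = twist2 J a b (P_act J p) (P_act J q) (P_act J r) (P_act J s + p)"
    unfolding twist2_def twist1_def homotopy by (simp add: Q1_adj_add add_ac)
  finally show ?thesis .
qed

lemma twist2_zero [simp]: "twist2 J a b 0 0 0 0 = 0"
  by (simp add: twist2_def)

lemma twist2_graded_iff:
  assumes "p \<in> MJ J" "q \<in> MJ J" "r \<in> MJ J" "s \<in> MJ J"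
  shows "twist2 J a b p q r s \<in> graded J2 k l \<longleftrightarrow>
    p \<in> graded J (Suc (Suc k)) l \<and> q \<in> graded J (Suc k) l \<and> r \<in> graded J (Suc k) l \<and> s \<in> graded J k l"
proof -
  have MJ_sums: "r + Q1_adj J p \<in> MJ J" "s + Q1_adj J q + Q1_adj J r \<in> MJ J"
    using assms by (auto intro!: add_in_MJ Q1_adj_in_MJ)
  have "twist2 J a b p q r s \<in> graded J2 k l \<longleftrightarrow>
      (p \<in> graded J (Suc (Suc k)) l \<and> q \<in> graded J (Suc k) l) \<and>
      (r + Q1_adj J p \<in> graded J (Suc k) l \<and> s + Q1_adj J q + Q1_adj J r \<in> graded J k l)"
    unfolding twist2_def using finite_J a_notin b_notin assms MJ_sums
    by (simp add: combine_graded_iff twist1_graded_iff twist1_in_MJ combine_in_MJ)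
  also have "\<dots> \<longleftrightarrow> p \<in> graded J (Suc (Suc k)) l \<and> q \<in> graded J (Suc k) l \<and>
      r \<in> graded J (Suc k) l \<and> s \<in> graded J k l"
  proof (cases "p \<in> graded J (Suc (Suc k)) l \<and> q \<in> graded J (Suc k) l \<and> r \<in> graded J (Suc k) l")
    case True
    then have "Q1_adj J p \<in> graded J (Suc k) l" "Q1_adj J q + Q1_adj J r \<in> graded J k l"
      using Q1_adj_graded[OF finite_J] add_in_graded by blast+
    with True show ?thesis
      using add_in_graded_iff by (metis add.assoc)
  next
    case False
    then show ?thesis
      using Q1_adj_graded[OF finite_J, of p "Suc k" l] add_in_graded_iff by blast
  qed
  finally show ?thesis .
qed

lemma twist2_in_graded_ker_iff:
  assumes "even (card J)" and "p \<in> MJ J" "q \<in> MJ J" "r \<in> MJ J" "s \<in> MJ J"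
  shows "twist2 J a b p q r s \<in> graded_ker J2 0 l \<longleftrightarrow>
    p = P_act J s \<and> q \<in> graded_ker J 1 l \<and> r \<in> graded_ker J 1 l \<and> s \<in> graded J 0 l"
proof -
  have "P_act J2 (twist2 J a b p q r s) = 0 \<longleftrightarrow>
      P_act J p = 0 \<and> P_act J q = 0 \<and> P_act J r = 0 \<and> P_act J s + p = 0"
    unfolding P_act_twist2[OF assms(1,2)]
    using twist2_inject[of "P_act J p" "P_act J q" "P_act J r" "P_act J s + p" 0 0 0 0]
      P_act_in_MJ add_in_MJ[OF P_act_in_MJ assms(2)] by auto
  moreover have "twist2 J a b p q r s \<in> graded J2 0 l \<longleftrightarrow>
      p \<in> graded J (Suc (Suc 0)) l \<and> q \<in> graded J 1 l \<and> r \<in> graded J 1 l \<and> s \<in> graded J 0 l"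
    using twist2_graded_iff[OF assms(2-5), of 0 l] by simp
  moreover have "P_act J s + p = 0 \<longleftrightarrow> p = P_act J s"
    by (auto simp: fun_bit_add_eq_0_iff)
  moreover have "p = P_act J s \<Longrightarrow> P_act J p = 0"
    using finite_J by simp
  moreover have "p = P_act J s \<Longrightarrow> s \<in> graded J 0 l \<Longrightarrow> p \<in> graded J (Suc (Suc 0)) l"
    using P_act_graded[OF finite_J] by simp
  ultimately show ?thesis
    unfolding graded_ker_def mem_Collect_eq by argo
qed

lemma twist2_in_graded_im_iff:
  assumes "even (card J)" and "p \<in> MJ J" "q \<in> MJ J" "r \<in> MJ J" "s \<in> MJ J"
  shows "twist2 J a b p q r s \<in> graded_im J2 0 l \<longleftrightarrow>
    p = P_act J s \<and> q \<in> graded_im J 1 l \<and> r \<in> graded_im J 1 l \<and> s \<in> graded J 0 l"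
proof -
  have "twist2 J a b p q r s \<in> P_act J2 ` MJ J2 \<longleftrightarrow>
      p = P_act J s \<and> q \<in> P_act J ` MJ J \<and> r \<in> P_act J ` MJ J"
  proof
    assume "twist2 J a b p q r s \<in> P_act J2 ` MJ J2"
    then obtain w where w: "w \<in> MJ J2" "twist2 J a b p q r s = P_act J2 w" by blast
    obtain p' q' r' s' where MJ': "p' \<in> MJ J" "q' \<in> MJ J" "r' \<in> MJ J" "s' \<in> MJ J"
      and "w = twist2 J a b p' q' r' s'"
      using twist2_cases[OF w(1)] .
    with w(2) have "twist2 J a b p q r s =
        twist2 J a b (P_act J p') (P_act J q') (P_act J r') (P_act J s' + p')"
      by (simp add: P_act_twist2[OF assms(1)])
    then have "p = P_act J p' \<and> q = P_act J q' \<and> r = P_act J r' \<and> s = P_act J s' + p'"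
      using assms(2-5) MJ' by (intro twist2_inject) (auto intro: add_in_MJ P_act_in_MJ)
    moreover have "P_act J (P_act J s' + p') = P_act J p'"
      using finite_J by (simp add: P_act_add)
    ultimately show "p = P_act J s \<and> q \<in> P_act J ` MJ J \<and> r \<in> P_act J ` MJ J"
      using MJ' by auto
  next
    assume "p = P_act J s \<and> q \<in> P_act J ` MJ J \<and> r \<in> P_act J ` MJ J"
    then obtain q' r' where "q' \<in> MJ J" "r' \<in> MJ J"
      and pqr: "p = P_act J s" "q = P_act J q'" "r = P_act J r'" by blast
    then have "twist2 J a b s q' r' 0 \<in> MJ J2"
      and "twist2 J a b p q r s = P_act J2 (twist2 J a b s q' r' 0)"
      using assms(1,5) by (simp_all add: P_act_twist2 twist2_in_MJ)
    then show "twist2 J a b p q r s \<in> P_act J2 ` MJ J2" by blast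
  qed
  moreover have "twist2 J a b p q r s \<in> graded J2 0 l \<longleftrightarrow>
      p \<in> graded J (Suc (Suc 0)) l \<and> q \<in> graded J 1 l \<and> r \<in> graded J 1 l \<and> s \<in> graded J 0 l"
    using twist2_graded_iff[OF assms(2-5), of 0 l] by simp
  moreover have "p = P_act J s \<Longrightarrow> s \<in> graded J 0 l \<Longrightarrow> p \<in> graded J (Suc (Suc 0)) l"
    using P_act_graded[OF finite_J] by simp
  ultimately show ?thesis
    unfolding graded_im_def Setcompr_eq_image Int_iff by argo
qed

lemma card_eq_if_twist2_iff:
  assumes "S \<subseteq> MJ J2" and "A \<subseteq> MJ J" and "B \<subseteq> MJ J" and "C \<subseteq> MJ J"
    and "\<And>p q r s. p \<in> MJ J \<Longrightarrow> q \<in> MJ J \<Longrightarrow> r \<in> MJ J \<Longrightarrow> s \<in> MJ J \<Longrightarrow>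
      twist2 J a b p q r s \<in> S \<longleftrightarrow> p = P_act J s \<and> q \<in> A \<and> r \<in> B \<and> s \<in> C"
  shows "card S = card A * card B * card C"
proof -
  let ?g = "\<lambda>(q, r, s). twist2 J a b (P_act J s) q r s"
  have "S = ?g ` (A \<times> B \<times> C)"
  proof (intro equalityI subsetI)
    fix v assume "v \<in> S"
    moreover obtain p q r s where "p \<in> MJ J" "q \<in> MJ J" "r \<in> MJ J" "s \<in> MJ J"
      and v: "v = twist2 J a b p q r s"
      using twist2_cases assms(1) \<open>v \<in> S\<close> by blast
    ultimately have "v = ?g (q, r, s)" and "(q, r, s) \<in> A \<times> B \<times> C"
      using assms(5) by auto
    then show "v \<in> ?g ` (A \<times> B \<times> C)" by blast
  next
    fix v assume "v \<in> ?g ` (A \<times> B \<times> C)"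
    then obtain q r s where "q \<in> A" "r \<in> B" "s \<in> C" "v = twist2 J a b (P_act J s) q r s" by auto
    with assms(2-4) show "v \<in> S"
      using assms(5)[OF P_act_in_MJ, of q r s] by auto
  qed
  moreover have "inj_on ?g (A \<times> B \<times> C)"
  proof (rule inj_onI)
    fix x y assume "x \<in> A \<times> B \<times> C" "y \<in> A \<times> B \<times> C" and eq: "?g x = ?g y"
    then obtain q r s q' r' s' where xy: "x = (q, r, s)" "y = (q', r', s')"
      and "q \<in> MJ J" "r \<in> MJ J" "s \<in> MJ J" "q' \<in> MJ J" "r' \<in> MJ J" "s' \<in> MJ J"
      using assms(2-4) by (cases x, cases y) blast
    from twist2_inject[OF P_act_in_MJ this(3-5) P_act_in_MJ this(6-8)] eq
    show "x = y" by (simp add: xy)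
  qed
  ultimately show ?thesis
    by (simp add: card_image card_cartesian_product)
qed

lemma card_graded_insert2:
  assumes "even (card J)"
  shows "card (graded_ker J2 0 l) = card (graded_ker J 1 l) * card (graded_ker J 1 l) * card (graded J 0 l)"
    and "card (graded_im J2 0 l) = card (graded_im J 1 l) * card (graded_im J 1 l) * card (graded J 0 l)"
proof -
  show "card (graded_ker J2 0 l) = card (graded_ker J 1 l) * card (graded_ker J 1 l) * card (graded J 0 l)"
    by (rule card_eq_if_twist2_iff)
      (simp_all add: graded_ker_subset_MJ graded_subset_MJ twist2_in_graded_ker_iff[OF assms])
  show "card (graded_im J2 0 l) = card (graded_im J 1 l) * card (graded_im J 1 l) * card (graded J 0 l)"
    by (rule card_eq_if_twist2_iff)
      (simp_all add: graded_im_subset_MJ graded_subset_MJ twist2_in_graded_im_iff[OF assms])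
qed

end

section \<open>Counting\<close>

lemma P_act_empty [simp]: "P_act {} f = 0"
  by (rule ext) (auto simp: P_act_def intro!: sum.neutral)

lemma graded_empty: "graded {} 0 l = (if l = 0 then MJ {} else {0})"
proof -
  have "f \<in> MJ {} \<Longrightarrow> f I \<noteq> 0 \<Longrightarrow> I = {}" for f I
    using MJ_outside by blast
  then show ?thesis
    using graded_subset_MJ[of "{}" 0 l] by (auto simp: graded_def fun_eq_iff)
qed

lemma card_MJ_empty: "card (MJ {}) = 2"
proof -
  have "MJ {} = {0, \<lambda>I. if I = {} then 1 else 0}"
  proof (intro equalityI subsetI)
    fix f assume "f \<in> MJ {}"
    then have outside: "f I = 0" if "I \<noteq> {}" for I using that MJ_outside by blast
    have "f = (if f {} = 0 then 0 else (\<lambda>I. if I = {} then 1 else 0))"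
    proof
      fix I show "f I = (if f {} = 0 then 0 else (\<lambda>I. if I = {} then 1 else 0)) I"
        using outside by (cases "I = {}") auto
    qed
    then show "f \<in> {0, \<lambda>I. if I = {} then 1 else 0}"
      by (metis insertI1 insertI2 singletonI)
  qed (auto simp: MJ_def split: if_splits)
  moreover have "(\<lambda>I::nat set. if I = {} then 1 else 0 :: bit) \<noteq> 0"
    by (auto simp: fun_eq_iff)
  ultimately show ?thesis by simp
qed

lemma card_graded_empty:
  "card (graded_ker {} 0 l) = 2 ^ (if l = 0 then 1 else 0) * card (graded_im {} 0 l)"
proof -
  have "graded_im {} 0 l = {0}"
    using zero_in_graded_im[of "{}" 0 l] by (auto simp: graded_im_def)
  moreover have "graded_ker {} 0 l = graded {} 0 l"
    by (simp add: graded_ker_def)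
  ultimately show ?thesis
    by (simp add: graded_empty card_MJ_empty)
qed

lemma card_graded_Suc:
  assumes "\<And>l. card (graded_ker J 0 l) = 2 ^ h l * card (graded_im J 0 l)"
  shows "card (graded_ker J 1 l) = 2 ^ (if l = 0 then 0 else h (l - 1)) * card (graded_im J 1 l)"
proof (cases "l = 0")
  case True
  then show ?thesis by (simp add: graded_ker_eq_zero graded_im_eq_zero)
next
  case False
  then show ?thesis
    using assms[of "l - 1"] graded_ker_shift[of 1 l J] graded_im_shift[of 1 l J] by simp
qed

lemma card_graded_even:
  "finite J \<Longrightarrow> card J = 2 * t \<Longrightarrow>
    card (graded_ker J 0 l) = 2 ^ (if l = t then 2 ^ t else 0) * card (graded_im J 0 l)"
proof (induction t arbitrary: J l)
  case 0
  then show ?case using card_graded_empty by simp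
next
  case (Suc t)
  obtain b J1 where J1: "J = insert b J1" "b \<notin> J1" "card J1 = Suc (2 * t)"
    using card_eq_SucD[of J "Suc (2 * t)"] Suc.prems(2) by auto
  obtain a J0 where J0: "J1 = insert a J0" "a \<notin> J0" "card J0 = 2 * t"
    using card_eq_SucD[OF J1(3)] by auto
  have "finite J0" using Suc.prems(1) J1(1) J0(1) by simp
  interpret two_new_indices J0 a b
    using \<open>finite J0\<close> J0 J1 by unfold_locales auto
  define e where "e = (if l = Suc t then 2 ^ t else 0 :: nat)"
  have ker1: "card (graded_ker J0 1 l) = 2 ^ e * card (graded_im J0 1 l)"
    using card_graded_Suc[OF Suc.IH[OF \<open>finite J0\<close> J0(3)]] by (simp add: e_def)
  have "card (graded_ker J 0 l) = 2 ^ e * 2 ^ e * card (graded_im J 0 l)"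
    using card_graded_insert2 J0 J1 ker1 by simp
  also have "2 ^ e * 2 ^ e = (2::nat) ^ (if l = Suc t then 2 ^ Suc t else 0)"
    by (simp add: e_def power_add[symmetric] mult_2)
  finally show ?case .
qed

lemma card_graded_odd:
  assumes "finite J" and "card J = 2 * t + 1"
  shows "card (graded_ker J 0 l) = 2 ^ (if l = t \<or> l = t + 1 then 2 ^ t else 0) * card (graded_im J 0 l)"
proof -
  obtain a J0 where J0: "J = insert a J0" "a \<notin> J0" "card J0 = 2 * t"
    using card_eq_SucD[of J "2 * t"] assms(2) by auto
  have "finite J0" using assms(1) J0(1) by simp
  note even = card_graded_even[OF \<open>finite J0\<close> J0(3)]
  have "card (graded_ker J 0 l) =
      2 ^ (if l = Suc t then 2 ^ t else 0) * 2 ^ (if l = t then 2 ^ t else 0) * card (graded_im J 0 l)"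
    using card_graded_insert[OF \<open>finite J0\<close> J0(2)] card_graded_Suc[OF even, of l] even[of l] J0
    by (simp add: ac_simps)
  also have "(2::nat) ^ (if l = Suc t then 2 ^ t else 0) * 2 ^ (if l = t then 2 ^ t else 0) =
      2 ^ (if l = t \<or> l = t + 1 then 2 ^ t else 0)"
    by auto
  finally show ?thesis .
qed

theorem mainTheorem9:
  fixes J :: "nat set" and l t :: nat
  assumes "finite J" and "0 \<notin> J"
  shows "(card J = 2 * t \<longrightarrow> margolis_dim J l = (if l = t then 2 ^ t else 0))
       \<and> (card J = 2 * t + 1 \<longrightarrow> margolis_dim J l = (if l = t \<or> l = t + 1 then 2 ^ t else 0))"
  using margolis_dim_eq_if_card[OF assms(1) card_graded_even[OF assms(1)]]
    margolis_dim_eq_if_card[OF assms(1) card_graded_odd[OF assms(1)]]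
  by blast

end
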